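(* Assume $c+\kappa>0$. (a) $R(\hat t_XX)R(\hat t_YY)$ and $R(\hat t_YY)R(\hat t_XX)$ are both rotations by angle $\pi$ (and their axes are orthogonal to $W_+$). (b) For all $t\in\mathbb R$: $R(\hat t_XX)R(\hat t_YY)=R(-\hat t_YY)R(-\hat t_XX)$, $R(\hat t_YY)R(\hat t_XX)=R(-\hat t_XX)R(-\hat t_YY)$, $R(\hat t_YY)R(\hat t_XX)R(tW_+)=R(-tW_+)R(\hat t_YY)R(\hat t_XX)$, $R(\hat t_XX)R(\hat t_YY)R(-tW_+)=R(tW_+)R(\hat t_XX)R(\hat t_YY)$. (c) If $\kappa=0$, then $R(\pi Y)R(tW_+)=R(-tW_+)R(\pi Y)$ for all $t\in\mathbb R$.
   Context: Fix unit vectors $X,Y\in\mathbb R^3$ with angle $\alpha\in(0,\pi/2]$, $c=\cos\alpha\in[0,1)$, and $\kappa\in[0,1]$. For a unit vector $v$, $R(tv)$ is rotation by angle $t$ about $v$ (counterclockwise viewed from the tip); for nonzero non-unit $v$, $R(tv):=R((t|v|)v/|v|)$. $W_+=(1+\kappa c)X-(\kappa+c)Y$. When $c+\kappa>0$: $\hat t_X=\arccos\frac{c-\kappa}{c+\kappa}$ and $\hat t_Y=\arccos\left(-\frac{1-\kappa c}{1+\kappa c}\right)$, both in $[0,\pi]$. *)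

theory Defs
  imports "HOL-Analysis.Analysis" "HOL-Analysis.Cross3"
begin

text \<open>Rotation R(w) of R^3 by angle norm w about the axis w / norm w
  (counterclockwise viewed from the tip, i.e. right-hand rule), given by
  the Rodrigues formula. For a unit vector v, rot (t *R v) is rotation by
  angle t about v; for nonzero non-unit v, rot (t *R v) is rotation by
  t * norm v about v / norm v, matching the paper's convention. rot 0 = id.\<close>
definition rot :: "real^3 \<Rightarrow> real^3 \<Rightarrow> real^3" where
  "rot w x = (let \<theta> = norm w; u = (1 / norm w) *\<^sub>R w in
      cos \<theta> *\<^sub>R x + sin \<theta> *\<^sub>R (cross3 u x) + ((1 - cos \<theta>) * (u \<bullet> x)) *\<^sub>R u)"

end

theory Submission
  imports Defs
begin

text \<open>
  Write A = rot (tX X) and B = rot (tY Y).  The whole proposition reduces to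
  part (a): A B and B A are half-turns (rotations by pi) about unit axes orthogonal to W.
  Indeed a half-turn P is an involution, so A B = P forces A B = B^-1 A^-1, which is the
  first two identities of (b); and a half-turn about an axis u conjugates rot w into
  rot (- w) whenever u is orthogonal to w, which gives the last two identities of (b) and,
  since Y is orthogonal to W when kappa = 0, also part (c).

  For (a) we use the quaternion picture of rotations: for unit vectors X, Y the product
  rot (2a X) rot (2b Y) has "scalar part" cos a cos b - (X.Y) sin a sin b, so it is a
  half-turn exactly when this vanishes, and its axis is the "vector part"
  sin a cos b X + cos a sin b Y + sin a sin b (X x Y).  We prove this criterion by comparing
  both sides on the frame X, Y, X x Y.  Finally, with a = tX/2 and b = tY/2 the half-angle
  formulas turn the definitions of tX and tY into the criterion, and into the relation
  sin a cos b = kappa cos a sin b which makes the axis orthogonal to W.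
\<close>

text \<open>For a unit axis v, the definition of rot reduces to the usual Rodrigues formula,
  whatever the sign of the angle.\<close>
lemma rot_unit_axis:
  assumes "norm v = 1"
  shows "rot (t *\<^sub>R v) x = cos t *\<^sub>R x + sin t *\<^sub>R cross3 v x + ((1 - cos t) * (v \<bullet> x)) *\<^sub>R v"
proof (cases "0 \<le> t")
  case True then show ?thesis using assms by (simp add: rot_def Let_def cross_mult_left)
next
  case False then show ?thesis using assms by (simp add: rot_def Let_def cross_mult_left)
qed

lemma rot_axis_fixed:
  assumes "norm v = 1"
  shows "rot (t *\<^sub>R v) v = v"
proof -
  have "v \<bullet> v = 1" using assms by (simp add: norm_eq_1)
  then show ?thesis by (simp add: rot_unit_axis[OF assms] flip: scaleR_add_left)
qed

text \<open>The Rodrigues formula in terms of the half angle; this is the form in which the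
  half-turn criterion becomes a polynomial identity.\<close>
lemma rot_double_angle:
  assumes "norm v = 1"
  shows "rot ((2 * a) *\<^sub>R v) x = ((cos a)\<^sup>2 - (sin a)\<^sup>2) *\<^sub>R x
    + (2 * sin a * cos a) *\<^sub>R cross3 v x + (2 * (sin a)\<^sup>2 * (v \<bullet> x)) *\<^sub>R v"
  unfolding rot_unit_axis[OF assms] cos_double sin_double
  by (simp add: cos_squared_eq)

lemma linear_rot: "linear (rot w)"
  by (rule linearI) (simp_all add: rot_def Let_def cross_add_right cross_mult_right algebra_simps)

lemma rot_inverse:
  assumes "norm v = 1"
  shows "rot ((- t) *\<^sub>R v) (rot (t *\<^sub>R v) x) = x"
proof -
  have vv: "v \<bullet> v = 1" using assms by (simp add: norm_eq_1)
  define y where "y = rot (t *\<^sub>R v) x"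
  have y: "y = cos t *\<^sub>R x + sin t *\<^sub>R cross3 v x + ((1 - cos t) * (v \<bullet> x)) *\<^sub>R v"
    by (simp add: y_def rot_unit_axis[OF assms])
  have vy: "v \<bullet> y = v \<bullet> x"
    by (simp add: y dot_cross_self vv algebra_simps)
  have cy: "cross3 v y = cos t *\<^sub>R cross3 v x + sin t *\<^sub>R ((v \<bullet> x) *\<^sub>R v - x)"
    by (simp add: y cross_add_right cross_mult_right Lagrange vv)
  have "rot ((- t) *\<^sub>R v) y = cos t *\<^sub>R y - sin t *\<^sub>R cross3 v y + ((1 - cos t) * (v \<bullet> y)) *\<^sub>R v"
    unfolding rot_unit_axis[OF assms] by simp
  also have "\<dots> = (cos t * cos t + sin t * sin t) *\<^sub>R (x - (v \<bullet> x) *\<^sub>R v) + (v \<bullet> x) *\<^sub>R v"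
    unfolding cy vy by (simp add: y algebra_simps del: sin_cos_squared_add3)
  also have "\<dots> = x"
    by simp
  finally show ?thesis by (simp add: y_def)
qed

lemma rot_undo:
  assumes "norm v = 1"
  shows "rot (t *\<^sub>R v) \<circ> rot ((- t) *\<^sub>R v) = id"
  using rot_inverse[OF assms, of "- t"] by (simp add: fun_eq_iff)

section \<open>Half-turns\<close>

lemma half_turn:
  assumes "norm u = 1"
  shows "rot (pi *\<^sub>R u) x = (2 * (u \<bullet> x)) *\<^sub>R u - x"
  unfolding rot_unit_axis[OF assms] by simp

lemma half_turn_involutive:
  assumes "norm u = 1"
  shows "rot (pi *\<^sub>R u) \<circ> rot (pi *\<^sub>R u) = id"
proof
  fix x
  have "u \<bullet> u = 1" using assms by (simp add: norm_eq_1)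
  then show "(rot (pi *\<^sub>R u) \<circ> rot (pi *\<^sub>R u)) x = id x"
    by (simp add: half_turn[OF assms] algebra_simps)
qed

text \<open>Conjugating a rotation by a half-turn about an orthogonal axis reverses the rotation:
  the half-turn maps the rotation axis w to - w.\<close>
lemma half_turn_conj:
  assumes u: "norm u = 1" and orth: "u \<bullet> w = 0"
  shows "rot (pi *\<^sub>R u) \<circ> rot w = rot (- w) \<circ> rot (pi *\<^sub>R u)"
proof
  fix x :: "real^3"
  have uu: "u \<bullet> u = 1" using u by (simp add: norm_eq_1)
  define n where "n = (1 / norm w) *\<^sub>R w"
  have un: "u \<bullet> n = 0" "n \<bullet> u = 0" using orth by (simp_all add: n_def inner_commute)
  have rot_w: "rot w y = cos (norm w) *\<^sub>R y + sin (norm w) *\<^sub>R cross3 n y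
      + ((1 - cos (norm w)) * (n \<bullet> y)) *\<^sub>R n" for y
    by (simp add: rot_def Let_def n_def)
  have rot_minus_w: "rot (- w) y = cos (norm w) *\<^sub>R y - sin (norm w) *\<^sub>R cross3 n y
      + ((1 - cos (norm w)) * (n \<bullet> y)) *\<^sub>R n" for y
    by (simp add: rot_def Let_def n_def)
  \<comment> \<open>The half-turn reverses the sign of the cross product with n.\<close>
  have flip: "(u \<bullet> x) *\<^sub>R cross3 n u + (u \<bullet> cross3 n x) *\<^sub>R u = cross3 n x"
  proof -
    have "cross3 u (cross3 u (cross3 n x)) = (u \<bullet> cross3 n x) *\<^sub>R u - cross3 n x"
      using Lagrange[of u u "cross3 n x"] by (simp add: uu)
    moreover have "cross3 u (cross3 n x) = (u \<bullet> x) *\<^sub>R n" by (simp add: Lagrange un)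
    ultimately show ?thesis by (simp add: cross_mult_right cross_skew[of u n] algebra_simps)
  qed
  show "(rot (pi *\<^sub>R u) \<circ> rot w) x = (rot (- w) \<circ> rot (pi *\<^sub>R u)) x"
    using arg_cong[OF flip, of "scaleR (2 * sin (norm w))"]
    by (simp add: half_turn[OF u] rot_w rot_minus_w cross_add_right cross_mult_right un
        dot_cross_self inner_commute[of u n] Cross3.right_diff_distrib algebra_simps)
      (simp add: vec_eq_iff)
qed

lemma involution_product_reverse:
  assumes prod: "f \<circ> g = h" and invol: "h \<circ> h = id"
    and f: "f \<circ> f' = id" and g: "g \<circ> g' = id"
  shows "f \<circ> g = g' \<circ> f'"
proof -
  have "g' \<circ> f' = (h \<circ> h) \<circ> (g' \<circ> f')" using invol by simp
  also have "\<dots> = h \<circ> (f \<circ> (g \<circ> g') \<circ> f')" by (simp add: prod[symmetric] o_assoc)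
  also have "\<dots> = h" by (simp add: f g)
  finally show ?thesis using prod by simp
qed

lemma rotation_pair_half_turn_identities:
  assumes X: "norm X = 1" and Y: "norm Y = 1" and u: "norm u = 1" and orth: "u \<bullet> W = 0"
    and prod: "rot (a *\<^sub>R X) \<circ> rot (b *\<^sub>R Y) = rot (pi *\<^sub>R u)"
  shows "rot (a *\<^sub>R X) \<circ> rot (b *\<^sub>R Y) = rot ((- b) *\<^sub>R Y) \<circ> rot ((- a) *\<^sub>R X)"
    and "rot (a *\<^sub>R X) \<circ> rot (b *\<^sub>R Y) \<circ> rot (t *\<^sub>R W)
         = rot ((- t) *\<^sub>R W) \<circ> rot (a *\<^sub>R X) \<circ> rot (b *\<^sub>R Y)"
proof -
  show "rot (a *\<^sub>R X) \<circ> rot (b *\<^sub>R Y) = rot ((- b) *\<^sub>R Y) \<circ> rot ((- a) *\<^sub>R X)"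
    by (rule involution_product_reverse[OF prod half_turn_involutive[OF u] rot_undo[OF X] rot_undo[OF Y]])
  have "u \<bullet> (t *\<^sub>R W) = 0" using orth by simp
  have "rot (a *\<^sub>R X) \<circ> rot (b *\<^sub>R Y) \<circ> rot (t *\<^sub>R W) = rot (pi *\<^sub>R u) \<circ> rot (t *\<^sub>R W)"
    by (simp only: prod)
  also have "\<dots> = rot (- (t *\<^sub>R W)) \<circ> rot (pi *\<^sub>R u)"
    by (rule half_turn_conj[OF u \<open>u \<bullet> (t *\<^sub>R W) = 0\<close>])
  also have "\<dots> = rot ((- t) *\<^sub>R W) \<circ> (rot (a *\<^sub>R X) \<circ> rot (b *\<^sub>R Y))"
    by (simp add: prod)
  finally show "rot (a *\<^sub>R X) \<circ> rot (b *\<^sub>R Y) \<circ> rot (t *\<^sub>R W)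
         = rot ((- t) *\<^sub>R W) \<circ> rot (a *\<^sub>R X) \<circ> rot (b *\<^sub>R Y)"
    by (simp add: o_assoc)
qed

section \<open>Computing in the frame X, Y, X \<times> Y\<close>

lemma triple_product_expansion:
  fixes x X Y Z :: "real^3"
  shows "(X \<bullet> cross3 Y Z) *\<^sub>R x
    = (x \<bullet> cross3 Y Z) *\<^sub>R X + (x \<bullet> cross3 Z X) *\<^sub>R Y + (x \<bullet> cross3 X Y) *\<^sub>R Z"
  unfolding vec_eq_iff forall_3 by (simp add: cross3_def inner_vec_def sum_3 algebra_simps)

text \<open>Three vectors with non-zero triple product form a basis, so linear maps agreeing on
  them agree everywhere.\<close>
lemma linear_eq_on_frame:
  fixes f g :: "real^3 \<Rightarrow> real^3"
  assumes f: "linear f" and g: "linear g" and frame: "X \<bullet> cross3 Y Z \<noteq> 0"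
    and agree: "f X = g X" "f Y = g Y" "f Z = g Z"
  shows "f = g"
proof
  fix x :: "real^3"
  define V where "V = X \<bullet> cross3 Y Z"
  have "x = (1 / V) *\<^sub>R (V *\<^sub>R x)" using frame by (simp add: V_def)
  also have "V *\<^sub>R x = (x \<bullet> cross3 Y Z) *\<^sub>R X + (x \<bullet> cross3 Z X) *\<^sub>R Y + (x \<bullet> cross3 X Y) *\<^sub>R Z"
    unfolding V_def by (rule triple_product_expansion)
  also have "(1 / V) *\<^sub>R \<dots> = ((x \<bullet> cross3 Y Z) / V) *\<^sub>R X + ((x \<bullet> cross3 Z X) / V) *\<^sub>R Y
      + ((x \<bullet> cross3 X Y) / V) *\<^sub>R Z"
    by (simp add: scaleR_add_right)
  finally have x: "x = ((x \<bullet> cross3 Y Z) / V) *\<^sub>R X + ((x \<bullet> cross3 Z X) / V) *\<^sub>R Y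
      + ((x \<bullet> cross3 X Y) / V) *\<^sub>R Z" .
  show "f x = g x"
    by (subst (1 2) x) (simp only: linear_add[OF f] linear_add[OF g] linear_scale[OF f] linear_scale[OF g] agree)
qed

lemma linear_on_frame_combination:
  assumes "linear f" and "f X = a1 *\<^sub>R X + b1 *\<^sub>R Y + d1 *\<^sub>R Z"
    "f Y = a2 *\<^sub>R X + b2 *\<^sub>R Y + d2 *\<^sub>R Z" "f Z = a3 *\<^sub>R X + b3 *\<^sub>R Y + d3 *\<^sub>R Z"
  shows "f (a *\<^sub>R X + b *\<^sub>R Y + d *\<^sub>R Z)
    = (a*a1 + b*a2 + d*a3) *\<^sub>R X + (a*b1 + b*b2 + d*b3) *\<^sub>R Y + (a*d1 + b*d2 + d*d3) *\<^sub>R Z"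
  using assms by (simp add: linear_add linear_scale algebra_simps)

lemma unit_cross_frame:
  fixes X Y :: "real^3"
  assumes X: "norm X = 1" and Y: "norm Y = 1"
  defines "Z \<equiv> cross3 X Y"
  shows "X \<bullet> Z = 0" "Z \<bullet> X = 0" "Y \<bullet> Z = 0" "Z \<bullet> Y = 0"
    and "Z \<bullet> Z = 1 - (X \<bullet> Y)\<^sup>2" and "X \<bullet> cross3 Y Z = Z \<bullet> Z"
    and "cross3 X Z = (X \<bullet> Y) *\<^sub>R X - Y" "cross3 Y Z = X - (X \<bullet> Y) *\<^sub>R Y" "cross3 Y X = - Z"
proof -
  have XX: "X \<bullet> X = 1" and YY: "Y \<bullet> Y = 1" using X Y by (simp_all add: norm_eq_1)
  show "X \<bullet> Z = 0" "Z \<bullet> X = 0" "Y \<bullet> Z = 0" "Z \<bullet> Y = 0"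
    by (simp_all add: Z_def dot_cross_self inner_commute)
  show "Z \<bullet> Z = 1 - (X \<bullet> Y)\<^sup>2"
    using norm_cross_dot[of X Y] X Y by (simp add: Z_def power2_norm_eq_inner)
  show "X \<bullet> cross3 Y Z = Z \<bullet> Z"
    using cross_triple[of X Y Z] by (simp add: Z_def inner_commute)
  show "cross3 X Z = (X \<bullet> Y) *\<^sub>R X - Y" "cross3 Y Z = X - (X \<bullet> Y) *\<^sub>R Y" "cross3 Y X = - Z"
    by (simp_all add: Z_def Lagrange XX YY inner_commute cross_skew[of Y X])
qed

lemma half_turn_on_frame:
  assumes u: "norm u = 1" and u_frame: "u = p *\<^sub>R X + q *\<^sub>R Y + r *\<^sub>R Z"
  shows "rot (pi *\<^sub>R u) X = (2 * (u \<bullet> X) * p - 1) *\<^sub>R X + (2 * (u \<bullet> X) * q) *\<^sub>R Y + (2 * (u \<bullet> X) * r) *\<^sub>R Z"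
    and "rot (pi *\<^sub>R u) Y = (2 * (u \<bullet> Y) * p) *\<^sub>R X + (2 * (u \<bullet> Y) * q - 1) *\<^sub>R Y + (2 * (u \<bullet> Y) * r) *\<^sub>R Z"
    and "rot (pi *\<^sub>R u) Z = (2 * (u \<bullet> Z) * p) *\<^sub>R X + (2 * (u \<bullet> Z) * q) *\<^sub>R Y + (2 * (u \<bullet> Z) * r - 1) *\<^sub>R Z"
  unfolding half_turn[OF u] by (subst (2) u_frame, simp add: algebra_simps)+

section \<open>When is a product of two rotations a half-turn?\<close>

text \<open>For unit, non-parallel X and Y, the product rot (2a X) rot (2b Y) is the half-turn
  about the (unit) vector part of the corresponding quaternion product, as soon as its
  scalar part cos a cos b - (X.Y) sin a sin b vanishes.  Both sides are compared on the
  frame X, Y, X \<times> Y; each coefficient identity is a polynomial consequence of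
  cos^2 + sin^2 = 1 and the hypothesis.\<close>
lemma half_turn_of_rotation_product:
  fixes X Y :: "real^3" and a b :: real
  assumes X: "norm X = 1" and Y: "norm Y = 1" and not_parallel: "\<bar>X \<bullet> Y\<bar> < 1"
    and cond: "cos a * cos b = (X \<bullet> Y) * sin a * sin b"
  defines "u \<equiv> (sin a * cos b) *\<^sub>R X + (cos a * sin b) *\<^sub>R Y + (sin a * sin b) *\<^sub>R cross3 X Y"
  shows "norm u = 1"
    and "u \<bullet> X = sin a * cos b + cos a * sin b * (X \<bullet> Y)"
    and "u \<bullet> Y = sin a * cos b * (X \<bullet> Y) + cos a * sin b"
    and "rot ((2 * a) *\<^sub>R X) \<circ> rot ((2 * b) *\<^sub>R Y) = rot (pi *\<^sub>R u)"
proof -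
  define c Z where "c = X \<bullet> Y" and "Z = cross3 X Y"
  note frame_facts = unit_cross_frame[OF X Y, folded Z_def c_def]
  have XX: "X \<bullet> X = 1" and YY: "Y \<bullet> Y = 1" and YX: "Y \<bullet> X = c" and XYZ: "cross3 X Y = Z"
    using X Y by (simp_all add: norm_eq_1 c_def Z_def inner_commute)
  have frame: "X \<bullet> cross3 Y Z \<noteq> 0"
    using frame_facts(5,6) not_parallel abs_square_less_1[of c] by (simp add: c_def)
  have pyth: "(cos a)\<^sup>2 + (sin a)\<^sup>2 = 1" "(cos b)\<^sup>2 + (sin b)\<^sup>2 = 1" by simp_all
  have cond': "cos a * cos b = c * sin a * sin b" using cond by (simp add: c_def)
  have A: "rot ((2 * a) *\<^sub>R X) X = 1 *\<^sub>R X + 0 *\<^sub>R Y + 0 *\<^sub>R Z"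
      "rot ((2 * a) *\<^sub>R X) Y = (2 * (sin a)\<^sup>2 * c) *\<^sub>R X + ((cos a)\<^sup>2 - (sin a)\<^sup>2) *\<^sub>R Y + (2 * sin a * cos a) *\<^sub>R Z"
      "rot ((2 * a) *\<^sub>R X) Z = (2 * sin a * cos a * c) *\<^sub>R X + (- 2 * sin a * cos a) *\<^sub>R Y + ((cos a)\<^sup>2 - (sin a)\<^sup>2) *\<^sub>R Z"
    by (simp_all add: rot_axis_fixed[OF X] rot_double_angle[OF X])
      (simp_all add: XYZ frame_facts c_def algebra_simps)
  have B: "rot ((2 * b) *\<^sub>R Y) X = ((cos b)\<^sup>2 - (sin b)\<^sup>2) *\<^sub>R X + (2 * (sin b)\<^sup>2 * c) *\<^sub>R Y + (- 2 * sin b * cos b) *\<^sub>R Z"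
      "rot ((2 * b) *\<^sub>R Y) Y = 0 *\<^sub>R X + 1 *\<^sub>R Y + 0 *\<^sub>R Z"
      "rot ((2 * b) *\<^sub>R Y) Z = (2 * sin b * cos b) *\<^sub>R X + (- 2 * sin b * cos b * c) *\<^sub>R Y + ((cos b)\<^sup>2 - (sin b)\<^sup>2) *\<^sub>R Z"
    by (simp_all add: rot_axis_fixed[OF Y] rot_double_angle[OF Y])
      (simp_all add: XYZ frame_facts YX algebra_simps)
  have u: "u = (sin a * cos b) *\<^sub>R X + (cos a * sin b) *\<^sub>R Y + (sin a * sin b) *\<^sub>R Z"
    by (simp add: u_def Z_def)
  have uX: "u \<bullet> X = sin a * cos b + cos a * sin b * c" and uY: "u \<bullet> Y = sin a * cos b * c + cos a * sin b"
    and uZ: "u \<bullet> Z = sin a * sin b * (1 - c\<^sup>2)"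
    by (simp_all add: u inner_add_left XX YY YX c_def frame_facts)
  then show "u \<bullet> X = sin a * cos b + cos a * sin b * (X \<bullet> Y)"
    and "u \<bullet> Y = sin a * cos b * (X \<bullet> Y) + cos a * sin b"
    by (simp_all add: c_def)
  have "u \<bullet> u = (sin a * cos b) * (u \<bullet> X) + (cos a * sin b) * (u \<bullet> Y) + (sin a * sin b) * (u \<bullet> Z)"
    by (subst (2) u) (simp add: inner_add_right inner_commute)
  also have "\<dots> = 1"
    unfolding uX uY uZ using pyth cond' by algebra
  finally show unit_u: "norm u = 1" by (simp add: norm_eq_1)
  have coefficientwise: "a1 *\<^sub>R X + b1 *\<^sub>R Y + d1 *\<^sub>R Z = a2 *\<^sub>R X + b2 *\<^sub>R Y + d2 *\<^sub>R Z"
    if "a1 = a2" "b1 = b2" "d1 = d2" for a1 b1 d1 a2 b2 d2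
    using that by simp
  have "rot ((2 * a) *\<^sub>R X) (rot ((2 * b) *\<^sub>R Y) X) = rot (pi *\<^sub>R u) X"
    and "rot ((2 * a) *\<^sub>R X) (rot ((2 * b) *\<^sub>R Y) Y) = rot (pi *\<^sub>R u) Y"
    and "rot ((2 * a) *\<^sub>R X) (rot ((2 * b) *\<^sub>R Y) Z) = rot (pi *\<^sub>R u) Z"
    unfolding B linear_on_frame_combination[OF linear_rot A] half_turn_on_frame[OF unit_u u] uX uY uZ
    by (rule coefficientwise; insert pyth cond'; algebra)+
  then show "rot ((2 * a) *\<^sub>R X) \<circ> rot ((2 * b) *\<^sub>R Y) = rot (pi *\<^sub>R u)"
    by (intro linear_eq_on_frame[OF linear_compose[OF linear_rot linear_rot] linear_rot frame]) simp_all
qed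

lemma axis_orthogonal:
  fixes u X Y :: "real^3"
  assumes "u \<bullet> X = s + r * (X \<bullet> Y)" and "u \<bullet> Y = s * (X \<bullet> Y) + r" and "s = \<kappa> * r"
  shows "u \<bullet> ((1 + \<kappa> * (X \<bullet> Y)) *\<^sub>R X - (\<kappa> + X \<bullet> Y) *\<^sub>R Y) = 0"
  using assms by (simp add: algebra_simps)

lemma rotation_products_are_half_turns:
  fixes X Y :: "real^3" and a b \<kappa> :: real
  assumes X: "norm X = 1" and Y: "norm Y = 1" and not_parallel: "\<bar>X \<bullet> Y\<bar> < 1"
    and cond: "cos a * cos b = (X \<bullet> Y) * sin a * sin b"
    and rel: "sin a * cos b = \<kappa> * cos a * sin b"
  defines "W \<equiv> (1 + \<kappa> * (X \<bullet> Y)) *\<^sub>R X - (\<kappa> + X \<bullet> Y) *\<^sub>R Y"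
  shows "\<exists>u. norm u = 1 \<and> u \<bullet> W = 0 \<and> rot ((2 * a) *\<^sub>R X) \<circ> rot ((2 * b) *\<^sub>R Y) = rot (pi *\<^sub>R u)"
    and "\<exists>u. norm u = 1 \<and> u \<bullet> W = 0 \<and> rot ((2 * b) *\<^sub>R Y) \<circ> rot ((2 * a) *\<^sub>R X) = rot (pi *\<^sub>R u)"
proof -
  have "sin a * cos b = \<kappa> * (cos a * sin b)" using rel by simp
  note orth = axis_orthogonal[where X = X and Y = Y and s = "sin a * cos b" and r = "cos a * sin b",
      OF _ _ this, folded W_def]
  note AB = half_turn_of_rotation_product[OF X Y not_parallel cond]
  show "\<exists>u. norm u = 1 \<and> u \<bullet> W = 0 \<and> rot ((2 * a) *\<^sub>R X) \<circ> rot ((2 * b) *\<^sub>R Y) = rot (pi *\<^sub>R u)"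
    using AB(1,4) orth[OF AB(2,3)] by blast
  have "\<bar>Y \<bullet> X\<bar> < 1" "cos b * cos a = (Y \<bullet> X) * sin b * sin a"
    using not_parallel cond by (simp_all add: inner_commute mult.commute mult.left_commute)
  then obtain u where u: "norm u = 1" "rot ((2 * b) *\<^sub>R Y) \<circ> rot ((2 * a) *\<^sub>R X) = rot (pi *\<^sub>R u)"
    and "u \<bullet> Y = sin b * cos a + cos b * sin a * (Y \<bullet> X)"
    and "u \<bullet> X = sin b * cos a * (Y \<bullet> X) + cos b * sin a"
    using half_turn_of_rotation_product[OF Y X] by blast
  then have "u \<bullet> X = sin a * cos b + cos a * sin b * (X \<bullet> Y)"
    and "u \<bullet> Y = sin a * cos b * (X \<bullet> Y) + cos a * sin b"
    by (simp_all add: inner_commute algebra_simps)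
  then show "\<exists>u. norm u = 1 \<and> u \<bullet> W = 0 \<and> rot ((2 * b) *\<^sub>R Y) \<circ> rot ((2 * a) *\<^sub>R X) = rot (pi *\<^sub>R u)"
    using u orth by blast
qed

section \<open>The half angles of the two rotations\<close>

lemma half_angle_of_arccos:
  assumes "- 1 \<le> y" "y \<le> 1"
  shows "(cos (arccos y / 2))\<^sup>2 = (1 + y) / 2" and "(sin (arccos y / 2))\<^sup>2 = (1 - y) / 2"
    and "0 \<le> cos (arccos y / 2)" and "0 \<le> sin (arccos y / 2)"
proof -
  let ?h = "arccos y / 2"
  have "y = 2 * (cos ?h)\<^sup>2 - 1" using cos_double_cos[of ?h] assms by simp
  then show "(cos ?h)\<^sup>2 = (1 + y) / 2" and "(sin ?h)\<^sup>2 = (1 - y) / 2"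
    by (simp_all add: sin_squared_eq)
  have "0 \<le> ?h" "?h \<le> pi / 2" using arccos_lbound arccos_ubound assms by auto
  then show "0 \<le> cos ?h" "0 \<le> sin ?h" by (simp_all add: cos_ge_zero sin_ge_zero)
qed

text \<open>With a = tX/2 and b = tY/2 we have cos^2 a = c/(c+kappa), sin^2 a = kappa/(c+kappa),
  cos^2 b = kappa c/(1+kappa c) and sin^2 b = 1/(1+kappa c), all half angles lying in
  [0, pi/2].\<close>
lemma half_angle_relations:
  fixes c \<kappa> :: real
  assumes c: "0 \<le> c" "c \<le> 1" and \<kappa>: "0 \<le> \<kappa>" "\<kappa> \<le> 1" and pos: "0 < c + \<kappa>"
  defines "a \<equiv> arccos ((c - \<kappa>) / (c + \<kappa>)) / 2"
    and "b \<equiv> arccos (- (1 - \<kappa> * c) / (1 + \<kappa> * c)) / 2"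
  shows "cos a * cos b = c * sin a * sin b" and "sin a * cos b = \<kappa> * cos a * sin b"
proof -
  have \<kappa>c: "0 \<le> \<kappa> * c" "\<kappa> * c \<le> 1" using c \<kappa> by (simp_all add: mult_le_one)
  have "- 1 \<le> (c - \<kappa>) / (c + \<kappa>)" "(c - \<kappa>) / (c + \<kappa>) \<le> 1"
    using c \<kappa> pos by (simp_all add: divide_simps)
  note A = half_angle_of_arccos[OF this, folded a_def]
  have "- 1 \<le> - (1 - \<kappa> * c) / (1 + \<kappa> * c)" "- (1 - \<kappa> * c) / (1 + \<kappa> * c) \<le> 1"
    using \<kappa>c by (simp_all add: divide_simps)
  note B = half_angle_of_arccos[OF this, folded b_def]
  have D: "c + \<kappa> \<noteq> 0" "1 + \<kappa> * c \<noteq> 0" using pos \<kappa>c by auto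
  have ca: "(cos a)\<^sup>2 = c / (c + \<kappa>)" and sa: "(sin a)\<^sup>2 = \<kappa> / (c + \<kappa>)"
    using A(1,2) D by (simp_all add: field_simps)
  have cb: "(cos b)\<^sup>2 = \<kappa> * c / (1 + \<kappa> * c)" and sb: "(sin b)\<^sup>2 = 1 / (1 + \<kappa> * c)"
    using B(1,2) D by (simp_all add: field_simps)
  show "cos a * cos b = c * sin a * sin b"
  proof (rule power2_eq_imp_eq)
    show "(cos a * cos b)\<^sup>2 = (c * sin a * sin b)\<^sup>2"
      unfolding power_mult_distrib ca sa cb sb using D by (simp add: field_simps power2_eq_square)
  qed (use A B c in simp_all)
  show "sin a * cos b = \<kappa> * cos a * sin b"
  proof (rule power2_eq_imp_eq)
    show "(sin a * cos b)\<^sup>2 = (\<kappa> * cos a * sin b)\<^sup>2"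
      unfolding power_mult_distrib ca sa cb sb using D by (simp add: field_simps power2_eq_square)
  qed (use A B \<kappa> in simp_all)
qed

theorem proposition4p5:
  fixes X Y :: "real^3" and \<alpha> \<kappa> c tX tY :: real and W :: "real^3"
  assumes X1: "norm X = 1" and Y1: "norm Y = 1"
    and \<alpha>: "0 < \<alpha>" "\<alpha> \<le> pi / 2" and angle: "X \<bullet> Y = cos \<alpha>"
    and \<kappa>: "0 \<le> \<kappa>" "\<kappa> \<le> 1"
    and c_def: "c = cos \<alpha>"
    and W_def: "W = (1 + \<kappa> * c) *\<^sub>R X - (\<kappa> + c) *\<^sub>R Y"
    and pos: "c + \<kappa> > 0"
    and tX_def: "tX = arccos ((c - \<kappa>) / (c + \<kappa>))"
    and tY_def: "tY = arccos (- (1 - \<kappa> * c) / (1 + \<kappa> * c))"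
  shows
    "(\<exists>u. norm u = 1 \<and> u \<bullet> W = 0 \<and> rot (tX *\<^sub>R X) \<circ> rot (tY *\<^sub>R Y) = rot (pi *\<^sub>R u))
     \<and> (\<exists>u. norm u = 1 \<and> u \<bullet> W = 0 \<and> rot (tY *\<^sub>R Y) \<circ> rot (tX *\<^sub>R X) = rot (pi *\<^sub>R u))
     \<and> rot (tX *\<^sub>R X) \<circ> rot (tY *\<^sub>R Y) = rot ((- tY) *\<^sub>R Y) \<circ> rot ((- tX) *\<^sub>R X)
     \<and> rot (tY *\<^sub>R Y) \<circ> rot (tX *\<^sub>R X) = rot ((- tX) *\<^sub>R X) \<circ> rot ((- tY) *\<^sub>R Y)
     \<and> (\<forall>t::real. rot (tY *\<^sub>R Y) \<circ> rot (tX *\<^sub>R X) \<circ> rot (t *\<^sub>R W)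
                 = rot ((- t) *\<^sub>R W) \<circ> rot (tY *\<^sub>R Y) \<circ> rot (tX *\<^sub>R X))
     \<and> (\<forall>t::real. rot (tX *\<^sub>R X) \<circ> rot (tY *\<^sub>R Y) \<circ> rot ((- t) *\<^sub>R W)
                 = rot (t *\<^sub>R W) \<circ> rot (tX *\<^sub>R X) \<circ> rot (tY *\<^sub>R Y))
     \<and> (\<kappa> = 0 \<longrightarrow> (\<forall>t::real. rot (pi *\<^sub>R Y) \<circ> rot (t *\<^sub>R W)
                 = rot ((- t) *\<^sub>R W) \<circ> rot (pi *\<^sub>R Y)))"
proof -
  have c: "0 \<le> c" "c \<le> 1" "c < 1"
    using \<alpha> cos_monotone_0_pi[of 0 \<alpha>] by (auto simp: c_def intro: cos_ge_zero)
  have XY: "X \<bullet> Y = c" and not_parallel: "\<bar>X \<bullet> Y\<bar> < 1"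
    using angle c by (simp_all add: c_def)
  define a b where "a = tX / 2" and "b = tY / 2"
  have tXY: "tX = 2 * a" "tY = 2 * b" by (simp_all add: a_def b_def)
  have cond: "cos a * cos b = (X \<bullet> Y) * sin a * sin b" and rel: "sin a * cos b = \<kappa> * cos a * sin b"
    using half_angle_relations[OF c(1,2) \<kappa> pos] by (simp_all add: a_def b_def tX_def tY_def XY)
  have W: "W = (1 + \<kappa> * (X \<bullet> Y)) *\<^sub>R X - (\<kappa> + X \<bullet> Y) *\<^sub>R Y" by (simp add: W_def XY)
  obtain u1 u2 where u1: "norm u1 = 1" "u1 \<bullet> W = 0" "rot (tX *\<^sub>R X) \<circ> rot (tY *\<^sub>R Y) = rot (pi *\<^sub>R u1)"
    and u2: "norm u2 = 1" "u2 \<bullet> W = 0" "rot (tY *\<^sub>R Y) \<circ> rot (tX *\<^sub>R X) = rot (pi *\<^sub>R u2)"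
    using rotation_products_are_half_turns[OF X1 Y1 not_parallel cond rel, folded W tXY] by blast
  note AB = rotation_pair_half_turn_identities[OF X1 Y1 u1]
  note BA = rotation_pair_half_turn_identities[OF Y1 X1 u2]
  have AB_conj: "rot (tX *\<^sub>R X) \<circ> rot (tY *\<^sub>R Y) \<circ> rot ((- t) *\<^sub>R W)
      = rot (t *\<^sub>R W) \<circ> rot (tX *\<^sub>R X) \<circ> rot (tY *\<^sub>R Y)" for t
    using AB(2)[of "- t"] by simp
  \<comment> \<open>For kappa = 0 the vector W = X - c Y is orthogonal to Y, which gives part (c).\<close>
  have Y_orth: "\<kappa> = 0 \<Longrightarrow> Y \<bullet> (t *\<^sub>R W) = 0" for t
    using Y1 by (simp add: W_def XY inner_diff_right inner_commute[of Y X] norm_eq_1)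
  show ?thesis
    using u1 u2 AB(1) BA AB_conj half_turn_conj[OF Y1 Y_orth] by auto
qed

end
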